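(* For fixed $r>1$ and integer $N\ge1$, the quantity $\gamma(r,K,N)$ is nondecreasing in the integer $K\ge1$, where $\gamma(r,K,N)$ is the supremum of $$\frac{p^K}{z^K}\sum_{i=1}^{K-1}\frac{z^i}{\sum_{j=i}^Kp^j}$$ over all $p=(p^1,\dots,p^K)$ with $rp^K\ge1$, $\sum_{i=1}^Kp^i=1$, $p^i>0$ for all $i$, and $z^i=(\sum_{j=1}^ip^j)^N-(\sum_{j=1}^{i-1}p^j)^N$. *)

theory Defs
  imports "HOL-Analysis.Analysis"
begin

text \<open>Vectors p = (p^1,...,p^K) are represented as functions nat => real, only indices 1..K matter.\<close>

definition zval :: "nat \<Rightarrow> (nat \<Rightarrow> real) \<Rightarrow> nat \<Rightarrow> real" where
  "zval N p i = (\<Sum>j=1..i. p j) ^ N - (\<Sum>j=1..i-1. p j) ^ N"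

definition gamma_obj :: "nat \<Rightarrow> nat \<Rightarrow> (nat \<Rightarrow> real) \<Rightarrow> real" where
  "gamma_obj K N p = p K / zval N p K * (\<Sum>i=1..K-1. zval N p i / (\<Sum>j=i..K. p j))"

definition admissible :: "real \<Rightarrow> nat \<Rightarrow> (nat \<Rightarrow> real) \<Rightarrow> bool" where
  "admissible r K p \<longleftrightarrow> r * p K \<ge> 1 \<and> (\<Sum>i=1..K. p i) = 1 \<and> (\<forall>i\<in>{1..K}. p i > 0)"

definition gamma :: "real \<Rightarrow> nat \<Rightarrow> nat \<Rightarrow> ereal" where
  "gamma r K N = (SUP p\<in>{p. admissible r K p}. ereal (gamma_obj K N p))"

end

theory Submission
  imports Defs
begin

text \<open>Splitting the first coordinate of an admissible vector p into e and p^1 - e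
  (with e small, to keep r p^{K+1} \<ge> 1 when K = 1) yields an admissible vector of length K + 1
  whose prefix sums, and hence whose z-values and tail sums, are those of p shifted by one index
  from the third coordinate on. The leading factor p^K / z^K is unchanged, and the first summand
  (p^1)^N / \<Sigma>p of the objective is replaced by
  e^N / \<Sigma>p + ((p^1)^N - e^N) / (\<Sigma>p - e), which is at least as large. For K = 1 the
  objective is an empty sum. So every value of the objective for K is attained or exceeded
  for K + 1.\<close>

definition split_first :: "real \<Rightarrow> (nat \<Rightarrow> real) \<Rightarrow> nat \<Rightarrow> real" where
  "split_first e p j = (if j = 1 then e else if j = 2 then p 1 - e else p (j - 1))"

lemma prefix_sum_split_first:
  assumes "1 \<le> i"
  shows "(\<Sum>j=1..Suc i. split_first e p j) = (\<Sum>j=1..i. p j)"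
  using assms
proof (induction i rule: dec_induct)
  case base
  show ?case by (simp add: split_first_def numeral_2_eq_2)
next
  case (step i)
  then show ?case by (simp add: split_first_def)
qed

lemma tail_sum_split_first:
  assumes "2 \<le> i"
  shows "(\<Sum>j=Suc i..Suc K. split_first e p j) = (\<Sum>j=i..K. p j)"
proof -
  have "(\<Sum>j=Suc i..Suc K. split_first e p j) = (\<Sum>j=i..K. split_first e p (Suc j))"
    by (rule sum.shift_bounds_cl_Suc_ivl)
  also have "\<dots> = (\<Sum>j=i..K. p j)"
    using assms by (intro sum.cong) (auto simp: split_first_def)
  finally show ?thesis .
qed

lemma zval_split_first_Suc:
  assumes "2 \<le> i"
  shows "zval N (split_first e p) (Suc i) = zval N p i"
proof -
  have "(\<Sum>j=1..i. split_first e p j) = (\<Sum>j=1..i-1. p j)"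
    using prefix_sum_split_first[of "i - 1" e p] assms by simp
  then show ?thesis
    using prefix_sum_split_first[of i e p] assms by (simp add: zval_def)
qed

lemma zval_nonneg:
  assumes "\<forall>j\<in>{1..i}. 0 \<le> p j"
  shows "0 \<le> zval N p i"
proof -
  have "(\<Sum>j=1..i-1. p j) \<le> (\<Sum>j=1..i. p j)"
    using assms by (intro sum_mono2) auto
  moreover have "0 \<le> (\<Sum>j=1..i-1. p j)"
    using assms by (intro sum_nonneg) auto
  ultimately show ?thesis
    unfolding zval_def by (simp add: power_mono)
qed

lemma gamma_obj_nonneg:
  assumes "\<forall>j\<in>{1..K}. 0 \<le> p j"
  shows "0 \<le> gamma_obj K N p"
proof -
  have "0 \<le> zval N p i" if "i \<le> K" for i
    using assms that by (intro zval_nonneg) auto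
  moreover have "0 \<le> (\<Sum>j=i..K. p j)" if "1 \<le> i" for i
    using assms that by (intro sum_nonneg) auto
  ultimately show ?thesis
    using assms unfolding gamma_obj_def
    by (cases "K = 0") (auto intro!: mult_nonneg_nonneg divide_nonneg_nonneg sum_nonneg)
qed

lemma split_first_pos:
  assumes "\<forall>j\<in>{1..K}. 0 < p j" and "0 < e" and "e < p 1"
  shows "\<forall>j\<in>{1..K+1}. 0 < split_first e p j"
proof
  fix j assume "j \<in> {1..K+1}"
  then have "j = 1 \<or> j = 2 \<or> j - 1 \<in> {1..K}" by auto
  then show "0 < split_first e p j"
    using assms by (auto simp: split_first_def)
qed

lemma admissible_split_first:
  assumes "admissible r K p" and "1 \<le> K" and "0 < e" and "e < p 1" and "1 \<le> r * (1 - e)"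
  shows "admissible r (K + 1) (split_first e p)"
proof -
  have pos: "\<forall>j\<in>{1..K}. 0 < p j" and total: "(\<Sum>j=1..K. p j) = 1" and last: "1 \<le> r * p K"
    using assms(1) by (auto simp: admissible_def)
  have "1 \<le> r * split_first e p (K + 1)"
  proof (cases "K = 1")
    case True
    then show ?thesis using total assms(5) by (simp add: split_first_def)
  next
    case False
    then show ?thesis using last assms(2) by (simp add: split_first_def)
  qed
  moreover have "(\<Sum>j=1..K+1. split_first e p j) = 1"
    using prefix_sum_split_first[OF assms(2)] total by simp
  ultimately show ?thesis
    using split_first_pos[OF pos assms(3,4)] by (simp add: admissible_def)
qed

lemma first_summand_le_split:
  fixes a e T :: real
  assumes "0 \<le> e" and "e \<le> a" and "e < T"
  shows "(a ^ N - 0 ^ N) / T \<le> (e ^ N - 0 ^ N) / T + (a ^ N - e ^ N) / (T - e)"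
proof -
  have "0 \<le> a ^ N - e ^ N" using assms by (simp add: power_mono)
  then have "(a ^ N - e ^ N) / T \<le> (a ^ N - e ^ N) / (T - e)"
    using assms by (intro divide_left_mono) auto
  then show ?thesis by (simp add: diff_divide_distrib)
qed

lemma gamma_obj_split_first_ge:
  assumes "2 \<le> K" and pos: "\<forall>j\<in>{1..K}. 0 < p j" and "0 < e" and "e < p 1"
  shows "gamma_obj K N p \<le> gamma_obj (K + 1) N (split_first e p)"
proof -
  define q where "q = split_first e p"
  define g where "g i = zval N p i / (\<Sum>j=i..K. p j)" for i
  define h where "h i = zval N q i / (\<Sum>j=i..K+1. q j)" for i
  have h_Suc: "h (Suc i) = g i" if "2 \<le> i" for i
    using that zval_split_first_Suc tail_sum_split_first by (simp add: g_def h_def q_def)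
  have q_total: "(\<Sum>j=1..K+1. q j) = (\<Sum>j=1..K. p j)"
    using prefix_sum_split_first[of K] assms(1) by (simp add: q_def)
  have "e < (\<Sum>j=1..K. p j)"
  proof -
    have "p 1 \<le> (\<Sum>j=1..K. p j)"
      using pos assms(1) by (intro member_le_sum) (auto intro: less_imp_le)
    then show ?thesis using assms(4) by simp
  qed
  moreover have "(\<Sum>j=2..K+1. q j) = (\<Sum>j=1..K. p j) - e"
  proof -
    have "(\<Sum>j=1..K+1. q j) = q 1 + (\<Sum>j=2..K+1. q j)"
      by (simp add: sum.atLeast_Suc_atMost numeral_2_eq_2)
    then show ?thesis using q_total by (simp add: q_def split_first_def)
  qed
  moreover have "(\<Sum>j=1..2. q j) = p 1"
    using prefix_sum_split_first[of 1 e p] by (simp add: q_def numeral_2_eq_2)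
  ultimately have first: "g 1 \<le> h 1 + h 2"
    using first_summand_le_split[of e "p 1" "\<Sum>j=1..K. p j" N] assms(3,4) q_total
    by (simp add: g_def h_def zval_def q_def split_first_def)
  have "(\<Sum>i=1..K-1. g i) = g 1 + (\<Sum>i=2..K-1. g i)"
    using assms(1) by (simp add: sum.atLeast_Suc_atMost numeral_2_eq_2)
  also have "\<dots> \<le> h 1 + h 2 + (\<Sum>i=2..K-1. h (Suc i))"
    using first h_Suc by simp
  also have "\<dots> = h 1 + h 2 + (\<Sum>i=3..K. h i)"
    using sum.shift_bounds_cl_Suc_ivl[of h 2 "K - 1"] assms(1) by (simp add: numeral_3_eq_3)
  also have "\<dots> = (\<Sum>i=1..K. h i)"
    using assms(1) by (simp add: sum.atLeast_Suc_atMost numeral_2_eq_2 numeral_3_eq_3)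
  finally have sums: "(\<Sum>i=1..K-1. g i) \<le> (\<Sum>i=1..K. h i)" .
  have factor: "q (K + 1) / zval N q (K + 1) = p K / zval N p K"
    using zval_split_first_Suc[OF assms(1)] assms(1) by (simp add: q_def split_first_def)
  have "0 \<le> p K / zval N p K"
    using pos assms(1) zval_nonneg[of K p N] by (simp add: less_imp_le)
  with sums have "gamma_obj K N p \<le> p K / zval N p K * (\<Sum>i=1..K. h i)"
    unfolding gamma_obj_def g_def by (rule mult_left_mono)
  then show ?thesis
    using factor unfolding gamma_obj_def h_def q_def by simp
qed

theorem lemma3:
  fixes r :: real and N K :: nat
  assumes "r > 1" and "N \<ge> 1" and "K \<ge> 1"
  shows "gamma r K N \<le> gamma r (K + 1) N"
  unfolding gamma_def
proof (rule SUP_least)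
  fix p assume "p \<in> {p. admissible r K p}"
  then have adm: "admissible r K p" by simp
  then have pos: "\<forall>j\<in>{1..K}. 0 < p j" by (simp add: admissible_def)
  define e where "e = min (p 1) (1 - 1 / r) / 2"
  have "0 < p 1" using pos assms(3) by simp
  moreover have "0 < 1 - 1 / r" using assms(1) by simp
  ultimately have e: "0 < e" "e < p 1" "1 \<le> r * (1 - e)"
    using assms(1) by (auto simp: e_def min_def field_simps)
  define q where "q = split_first e p"
  have q_adm: "admissible r (K + 1) q"
    unfolding q_def using admissible_split_first[OF adm assms(3) e] .
  have "gamma_obj K N p \<le> gamma_obj (K + 1) N q"
  proof (cases "K = 1")
    case True
    then show ?thesis
      using gamma_obj_nonneg[of "K + 1" q N] q_adm
      by (simp add: gamma_obj_def admissible_def less_imp_le)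
  next
    case False
    then show ?thesis
      unfolding q_def using gamma_obj_split_first_ge[OF _ pos e(1,2)] assms(3) by simp
  qed
  with q_adm show "ereal (gamma_obj K N p)
      \<le> (SUP q\<in>{q. admissible r (K + 1) q}. ereal (gamma_obj (K + 1) N q))"
    by (intro SUP_upper2[of q]) auto
qed

end
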